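(* Let $G=(V,E,\omega)\in\mathcal G$, $\gamma\geq0$, and $\tau>0$. Define $J_\tau:\mathcal V\to\mathbb R$ by $J_\tau(u):=\langle\chi_V-u,e^{-\tau L}u\rangle_{\mathcal V}$. Then $J_\tau$ is strictly concave and Fréchet differentiable, with directional derivative at $u$ in direction $v$ given by $dJ^u_\tau(v)=\langle\chi_V-2e^{-\tau L}u,v\rangle_{\mathcal V}$. Furthermore, if $S^0\subset V$ and $\{S^k\}_{k=1}^N$ ($N\in\mathbb N\cup\{\infty\}$) is generated by the OKMBO scheme, then for all $k\in\{1,\dots,N\}$, $\chi_{S^k}\in\operatorname{argmin}_{v\in\mathcal K}dJ_\tau^{\chi_{S^{k-1}}}(v)$, and $J_\tau(\chi_{S^k})\leq J_\tau(\chi_{S^{k-1}})$, with equality if and only if $S^k=S^{k-1}$.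
   Context: $\mathcal{G}$ is the set of finite, simple, connected, undirected, edge-weighted graphs $G=(V,E,\omega)$ with $V=\{1,\dots,n\}$, $n\geq2$, weights $\omega_{ij}=\omega_{ji}>0$ on edges, $0$ otherwise. $d_i=\sum_j\omega_{ij}$. $\mathcal V$: functions $V\to\mathbb R$. Fixed $r\in[0,1]$: $\langle u,v\rangle_{\mathcal V}=\sum_id_i^ru_iv_i$, $(\Delta u)_i=d_i^{-r}\sum_j\omega_{ij}(u_i-u_j)$, $\mathcal M(u)=\sum_id_i^ru_i$, $\mathcal A(u)=\frac{\mathcal M(u)}{\sum_id_i^r}\chi_V$ ($\chi_S$ indicator of $S$). For $u\in\mathcal V$ let $\varphi$ be the unique solution of $\Delta\varphi=u-\mathcal A(u)$, $\mathcal M(\varphi)=0$, and $Lu:=\Delta u+\gamma\varphi$; $e^{-\tau L}$ is its operator exponential. $\mathcal K$: the set of $[0,1]$-valued functions in $\mathcal V$. OKMBO scheme: given $S^0\subset V$, $\gamma$, $\tau$, for $k=1,\dots,N$ compute $u=e^{-\tau L}\chi_{S^{k-1}}$ (the time-$\tau$ solution of $du/dt=-Lu$, $u(0)=\chi_{S^{k-1}}$) and set $S^k=\{i\in V:u_i\geq\frac12\}$. *)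

theory Defs
  imports "HOL-Analysis.Analysis"
begin

text \<open>Vertex set: a finite type 'v (standing for V = {1..n}); functions in the
  space of vertex functions are vectors in real ^ 'v.  Weights: w :: 'v => 'v => real.\<close>

definition wgraph :: "('v::finite \<Rightarrow> 'v \<Rightarrow> real) \<Rightarrow> bool" where
  "wgraph w \<longleftrightarrow> (\<forall>i j. w i j = w j i) \<and> (\<forall>i j. 0 \<le> w i j) \<and> (\<forall>i. w i i = 0)
     \<and> (\<forall>i j. (i, j) \<in> {(a, b). 0 < w a b}\<^sup>*)"

definition deg :: "('v::finite \<Rightarrow> 'v \<Rightarrow> real) \<Rightarrow> 'v \<Rightarrow> real" where
  "deg w i = (\<Sum>j\<in>UNIV. w i j)"

definition innerV :: "('v::finite \<Rightarrow> 'v \<Rightarrow> real) \<Rightarrow> real \<Rightarrow> real^'v \<Rightarrow> real^'v \<Rightarrow> real" where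
  "innerV w r u v = (\<Sum>i\<in>UNIV. deg w i powr r * u $ i * v $ i)"

definition Lap :: "('v::finite \<Rightarrow> 'v \<Rightarrow> real) \<Rightarrow> real \<Rightarrow> real^'v \<Rightarrow> real^'v" where
  "Lap w r u = (\<chi> i. deg w i powr (- r) * (\<Sum>j\<in>UNIV. w i j * (u $ i - u $ j)))"

definition massV :: "('v::finite \<Rightarrow> 'v \<Rightarrow> real) \<Rightarrow> real \<Rightarrow> real^'v \<Rightarrow> real" where
  "massV w r u = (\<Sum>i\<in>UNIV. deg w i powr r * u $ i)"

definition chi :: "'v::finite set \<Rightarrow> real^'v" where
  "chi S = (\<chi> i. if i \<in> S then 1 else 0)"

definition avgV :: "('v::finite \<Rightarrow> 'v \<Rightarrow> real) \<Rightarrow> real \<Rightarrow> real^'v \<Rightarrow> real^'v" where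
  "avgV w r u = (massV w r u / (\<Sum>i\<in>UNIV. deg w i powr r)) *\<^sub>R chi UNIV"

definition phiV :: "('v::finite \<Rightarrow> 'v \<Rightarrow> real) \<Rightarrow> real \<Rightarrow> real^'v \<Rightarrow> real^'v" where
  "phiV w r u = (THE p. Lap w r p = u - avgV w r u \<and> massV w r p = 0)"

definition Lop :: "('v::finite \<Rightarrow> 'v \<Rightarrow> real) \<Rightarrow> real \<Rightarrow> real \<Rightarrow> real^'v \<Rightarrow> real^'v" where
  "Lop w r \<gamma> u = Lap w r u + \<gamma> *\<^sub>R phiV w r u"

definition expL :: "('v::finite \<Rightarrow> 'v \<Rightarrow> real) \<Rightarrow> real \<Rightarrow> real \<Rightarrow> real \<Rightarrow> real^'v \<Rightarrow> real^'v" where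
  "expL w r \<gamma> \<tau> u = (\<Sum>k. ((- \<tau>) ^ k / fact k) *\<^sub>R ((Lop w r \<gamma> ^^ k) u))"

definition Jtau :: "('v::finite \<Rightarrow> 'v \<Rightarrow> real) \<Rightarrow> real \<Rightarrow> real \<Rightarrow> real \<Rightarrow> real^'v \<Rightarrow> real" where
  "Jtau w r \<gamma> \<tau> u = innerV w r (chi UNIV - u) (expL w r \<gamma> \<tau> u)"

definition dJtau :: "('v::finite \<Rightarrow> 'v \<Rightarrow> real) \<Rightarrow> real \<Rightarrow> real \<Rightarrow> real \<Rightarrow> real^'v \<Rightarrow> real^'v \<Rightarrow> real" where
  "dJtau w r \<gamma> \<tau> u v = innerV w r (chi UNIV - 2 *\<^sub>R expL w r \<gamma> \<tau> u) v"

definition Kset :: "(real^'v::finite) set" where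
  "Kset = {u. \<forall>i. 0 \<le> u $ i \<and> u $ i \<le> 1}"

definition okmbo_step :: "('v::finite \<Rightarrow> 'v \<Rightarrow> real) \<Rightarrow> real \<Rightarrow> real \<Rightarrow> real \<Rightarrow> 'v set \<Rightarrow> 'v set" where
  "okmbo_step w r \<gamma> \<tau> S = {i. expL w r \<gamma> \<tau> (chi S) $ i \<ge> 1/2}"

definition strictly_concave_on :: "'a::real_vector set \<Rightarrow> ('a \<Rightarrow> real) \<Rightarrow> bool" where
  "strictly_concave_on S f \<longleftrightarrow> convex S \<and>
     (\<forall>x\<in>S. \<forall>y\<in>S. x \<noteq> y \<longrightarrow> (\<forall>t. 0 < t \<and> t < 1 \<longrightarrow>
        f ((1 - t) *\<^sub>R x + t *\<^sub>R y) > (1 - t) * f x + t * f y))"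

end

theory Submission
  imports Defs
begin

text \<open>The operator L is self-adjoint for the weighted inner product: the graph
  Laplacian is, by symmetry of the weights, and so is phi, which inverts the Laplacian on
  functions of mass zero. Hence every e^{-tL} is self-adjoint, and
  <u, e^{-tL} u> = |e^{-tL/2} u|^2 > 0 for u \<noteq> 0, since e^{tL/2} inverts e^{-tL/2}.
  As L annihilates constants, J(u) = M(u) - <u, e^{-tL} u> is a quadratic functional with
  negative definite quadratic part, which gives strict concavity, the derivative, and
  the exact expansion J(v) = J(u) + dJ^u(v - u) - <v - u, e^{-tL}(v - u)>.
  The OKMBO step minimises the linear functional dJ^u over K vertex by vertex, so
  dJ^u(chi_{S^k} - chi_{S^{k-1}}) \<le> 0 and J decreases, strictly unless S^k = S^{k-1}.\<close>

lemma bilinear_innerV: "bilinear (innerV w r)"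
  unfolding bilinear_def innerV_def
  by (auto intro!: linearI simp: algebra_simps sum.distrib sum_distrib_left)

lemmas innerV_add_left = bilinear_ladd[OF bilinear_innerV]
  and innerV_add_right = bilinear_radd[OF bilinear_innerV]
  and innerV_diff_left = bilinear_lsub[OF bilinear_innerV]
  and innerV_diff_right = bilinear_rsub[OF bilinear_innerV]
  and innerV_scaleR_left = bilinear_lmul[OF bilinear_innerV, unfolded real_scaleR_def]
  and innerV_scaleR_right = bilinear_rmul[OF bilinear_innerV, unfolded real_scaleR_def]
  and innerV_minus_left = bilinear_lneg[OF bilinear_innerV]
  and innerV_zero_left [simp] = bilinear_lzero[OF bilinear_innerV]
  and innerV_zero_right [simp] = bilinear_rzero[OF bilinear_innerV]

lemma bounded_bilinear_innerV: "bounded_bilinear (innerV w r)"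
  using bilinear_conv_bounded_bilinear bilinear_innerV by blast

lemma innerV_commute: "innerV w r u v = innerV w r v u"
  unfolding innerV_def by (simp add: mult_ac)

lemma innerV_chi_UNIV: "innerV w r (chi UNIV) u = massV w r u"
  unfolding massV_def innerV_def chi_def by simp

lemma innerV_self_pos:
  assumes "\<forall>i. 0 < deg w i" and "u \<noteq> 0"
  shows "0 < innerV w r u u"
proof -
  obtain i where i: "u $ i \<noteq> 0" using assms(2) by (metis vec_eq_iff zero_index)
  have nonneg: "0 \<le> deg w j powr r * u $ j * u $ j" for j
    by (simp add: mult.assoc)
  have "0 < deg w i powr r * u $ i * u $ i"
    using assms(1)[rule_format, of i] i by (auto simp: mult.assoc zero_less_mult_iff)
  also have "\<dots> \<le> innerV w r u u"
    unfolding innerV_def by (rule member_le_sum) (use nonneg in auto)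
  finally show ?thesis .
qed

lemma innerV_suminf_Cauchy_product:
  fixes X Y :: "nat \<Rightarrow> real^'v::finite"
  assumes X: "summable (\<lambda>k. norm (X k))" and Y: "summable (\<lambda>k. norm (Y k))"
  shows "innerV w r (suminf X) (suminf Y) = (\<Sum>n. \<Sum>j\<le>n. innerV w r (X j) (Y (n - j)))"
proof -
  let ?c = "\<lambda>i. deg w i powr r"
  have nx: "summable (\<lambda>k. norm (X k $ i))" for i
    by (rule summable_comparison_test'[OF X]) (simp add: component_le_norm_cart)
  have ny: "summable (\<lambda>k. norm (Y k $ i))" for i
    by (rule summable_comparison_test'[OF Y]) (simp add: component_le_norm_cart)
  have nth_suminf: "suminf Z $ i = (\<Sum>k. Z k $ i)" if "summable (\<lambda>k. norm (Z k))" for Z :: "nat \<Rightarrow> real^'v" and i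
    using bounded_linear.suminf[OF bounded_linear_vec_nth summable_norm_cancel[OF that]] by simp
  have sc: "summable (\<lambda>n. \<Sum>j\<le>n. X j $ i * Y (n - j) $ i)" for i
    by (rule summable_Cauchy_product[OF nx ny])
  have "innerV w r (suminf X) (suminf Y) = (\<Sum>i\<in>UNIV. ?c i * ((\<Sum>k. X k $ i) * (\<Sum>k. Y k $ i)))"
    unfolding innerV_def nth_suminf[OF X] nth_suminf[OF Y] by (simp add: mult.assoc)
  also have "\<dots> = (\<Sum>i\<in>UNIV. \<Sum>n. ?c i * (\<Sum>j\<le>n. X j $ i * Y (n - j) $ i))"
    by (simp add: Cauchy_product[OF nx ny] suminf_mult[OF sc])
  also have "\<dots> = (\<Sum>n. \<Sum>i\<in>UNIV. ?c i * (\<Sum>j\<le>n. X j $ i * Y (n - j) $ i))"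
    by (rule suminf_sum[symmetric]) (rule summable_mult[OF sc])
  also have "\<dots> = (\<Sum>n. \<Sum>j\<le>n. innerV w r (X j) (Y (n - j)))"
    unfolding innerV_def by (subst sum.swap) (simp add: sum_distrib_left mult.assoc)
  finally show ?thesis .
qed

definition exp_op :: "('a::real_normed_vector \<Rightarrow> 'a) \<Rightarrow> real \<Rightarrow> 'a \<Rightarrow> 'a" where
  "exp_op A t u = (\<Sum>k. ((- t) ^ k / fact k) *\<^sub>R (A ^^ k) u)"

lemma expL_eq_exp_op: "expL w r \<gamma> = exp_op (Lop w r \<gamma>)"
  by (simp add: fun_eq_iff expL_def exp_op_def)

lemma linear_funpow:
  fixes A :: "'a::real_vector \<Rightarrow> 'a" and k :: nat
  assumes "linear A"
  shows "linear (A ^^ k)"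
proof (induction k)
  case 0
  show ?case by (rule linearI) simp_all
next
  case (Suc k)
  show ?case using linear_compose[OF Suc.IH assms] by (simp add: o_def)
qed

lemma norm_funpow_le:
  fixes A :: "'a::real_normed_vector \<Rightarrow> 'a"
  assumes "bounded_linear A"
  obtains K where "\<And>k x. norm ((A ^^ k) x) \<le> K ^ k * norm x"
proof -
  obtain K where K: "0 < K" "\<And>x. norm (A x) \<le> norm x * K"
    using bounded_linear.pos_bounded[OF assms] by blast
  have "norm ((A ^^ k) x) \<le> K ^ k * norm x" for k x
  proof (induction k)
    case (Suc k)
    have "norm ((A ^^ Suc k) x) \<le> norm ((A ^^ k) x) * K" using K(2)[of "(A ^^ k) x"] by simp
    also have "\<dots> \<le> K ^ k * norm x * K" using Suc K(1) by (simp add: mult_right_mono)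
    finally show ?case by (simp add: mult_ac)
  qed simp
  with that show ?thesis by blast
qed

lemma summable_norm_exp_op_terms:
  fixes A :: "'a::real_normed_vector \<Rightarrow> 'a"
  assumes "bounded_linear A"
  shows "summable (\<lambda>k. norm (((- t) ^ k / fact k) *\<^sub>R (A ^^ k) u))"
proof -
  obtain K where K: "\<And>k x. norm ((A ^^ k) x) \<le> K ^ k * norm x"
    using norm_funpow_le[OF assms] by blast
  have "summable (\<lambda>k. inverse (fact k) * (\<bar>t\<bar> * K) ^ k * norm u)"
    by (rule summable_mult2[OF summable_exp])
  then show ?thesis
  proof (rule summable_comparison_test')
    fix k
    have "norm (norm (((- t) ^ k / fact k) *\<^sub>R (A ^^ k) u)) = \<bar>t\<bar> ^ k / fact k * norm ((A ^^ k) u)"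
      by (simp add: power_abs)
    also have "\<dots> \<le> \<bar>t\<bar> ^ k / fact k * (K ^ k * norm u)"
      by (rule mult_left_mono[OF K]) simp
    also have "\<dots> = inverse (fact k) * (\<bar>t\<bar> * K) ^ k * norm u"
      by (simp add: power_mult_distrib divide_inverse mult_ac)
    finally show "norm (norm (((- t) ^ k / fact k) *\<^sub>R (A ^^ k) u)) \<le> \<dots>" .
  qed
qed

lemma summable_exp_op_terms:
  fixes A :: "'a::banach \<Rightarrow> 'a"
  shows "bounded_linear A \<Longrightarrow> summable (\<lambda>k. ((- t) ^ k / fact k) *\<^sub>R (A ^^ k) u)"
  by (rule summable_norm_cancel[OF summable_norm_exp_op_terms])

lemma linear_exp_op:
  fixes A :: "'a::banach \<Rightarrow> 'a"
  assumes "bounded_linear A"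
  shows "linear (exp_op A t)"
proof (rule linearI)
  have A: "linear (A ^^ k)" for k
    using assms bounded_linear.linear linear_funpow by blast
  note summable = summable_exp_op_terms[OF assms]
  show "exp_op A t (x + y) = exp_op A t x + exp_op A t y" for x y
    unfolding exp_op_def suminf_add[OF summable summable]
    by (simp add: linear_add[OF A] scaleR_add_right)
  show "exp_op A t (c *\<^sub>R x) = c *\<^sub>R exp_op A t x" for c x
  proof -
    have "c *\<^sub>R exp_op A t x = (\<Sum>k. c *\<^sub>R (((- t) ^ k / fact k) *\<^sub>R (A ^^ k) x))"
      unfolding exp_op_def by (rule suminf_scaleR_right[OF summable])
    then show ?thesis by (simp add: exp_op_def linear_scale[OF A] mult_ac)
  qed
qed

lemma exp_op_0: "exp_op A 0 u = u"
proof -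
  have "(\<lambda>k. ((- 0) ^ k / fact k) *\<^sub>R (A ^^ k) u) = (\<lambda>k. if k = 0 then u else 0)"
    by (auto simp: fun_eq_iff)
  then show ?thesis
    unfolding exp_op_def using sums_single[of 0 "\<lambda>_. u"] by (simp add: sums_iff)
qed

lemma exp_op_kernel:
  assumes "linear A" and "A u = 0"
  shows "exp_op A t u = u"
proof -
  have "(A ^^ k) u = 0" if "0 < k" for k
    using that assms(2) linear_0[OF linear_funpow[OF assms(1)]]
    by (cases k) (simp_all add: funpow_swap1)
  then have "(\<lambda>k. ((- t) ^ k / fact k) *\<^sub>R (A ^^ k) u) = (\<lambda>k. if k = 0 then u else 0)"
    by (auto simp: fun_eq_iff elim: not0_implies_Suc)
  then show ?thesis
    unfolding exp_op_def using sums_single[of 0 "\<lambda>_. u"] by (simp add: sums_iff)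
qed

definition selfadjointV :: "('v::finite \<Rightarrow> 'v \<Rightarrow> real) \<Rightarrow> real \<Rightarrow> (real^'v \<Rightarrow> real^'v) \<Rightarrow> bool" where
  "selfadjointV w r A \<longleftrightarrow> (\<forall>x y. innerV w r (A x) y = innerV w r x (A y))"

lemma selfadjointV_funpow:
  assumes "selfadjointV w r A"
  shows "innerV w r ((A ^^ k) x) y = innerV w r x ((A ^^ k) y)"
proof (induction k arbitrary: y)
  case (Suc k)
  have "innerV w r ((A ^^ Suc k) x) y = innerV w r ((A ^^ k) x) (A y)"
    using assms by (simp add: selfadjointV_def)
  also have "\<dots> = innerV w r x ((A ^^ Suc k) y)"
    by (simp add: Suc.IH funpow_swap1)
  finally show ?case .
qed simp

lemma selfadjointV_exp_op:
  assumes "linear A" and "selfadjointV w r A"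
  shows "selfadjointV w r (exp_op A t)"
proof -
  have bl: "bounded_linear A" using assms(1) linear_conv_bounded_linear by blast
  have "innerV w r (exp_op A t x) y = innerV w r x (exp_op A t y)" for x y
    unfolding exp_op_def
      bounded_linear.suminf[OF bounded_bilinear.bounded_linear_left[OF bounded_bilinear_innerV]
        summable_exp_op_terms[OF bl]]
      bounded_linear.suminf[OF bounded_bilinear.bounded_linear_right[OF bounded_bilinear_innerV]
        summable_exp_op_terms[OF bl]]
    by (simp add: innerV_scaleR_left innerV_scaleR_right selfadjointV_funpow[OF assms(2)])
  then show ?thesis unfolding selfadjointV_def by blast
qed

lemma innerV_exp_op_exp_op:
  assumes "linear A" and "selfadjointV w r A"
  shows "innerV w r (exp_op A s u) (exp_op A t u) = innerV w r u (exp_op A (s + t) u)"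
proof -
  have bl: "bounded_linear A" using assms(1) linear_conv_bounded_linear by blast
  let ?a = "\<lambda>t k. ((- t) ^ k / fact k) *\<^sub>R (A ^^ k) u"
  have coeff: "(\<Sum>j\<le>n. (- s) ^ j / fact j * ((- t) ^ (n - j) / fact (n - j)))
      = (- (s + t)) ^ n / fact n" for n
    using exp_series_add_commuting[of "- s :: real" "- t" n] by (simp add: divide_inverse mult_ac)
  have "innerV w r (exp_op A s u) (exp_op A t u) = (\<Sum>n. \<Sum>j\<le>n. innerV w r (?a s j) (?a t (n - j)))"
    unfolding exp_op_def
    by (rule innerV_suminf_Cauchy_product[OF summable_norm_exp_op_terms[OF bl]
          summable_norm_exp_op_terms[OF bl]])
  also have "\<dots> = (\<Sum>n. ((- (s + t)) ^ n / fact n) * innerV w r u ((A ^^ n) u))"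
  proof (rule suminf_cong)
    fix n
    have "innerV w r (?a s j) (?a t (n - j))
        = (- s) ^ j / fact j * ((- t) ^ (n - j) / fact (n - j)) * innerV w r u ((A ^^ n) u)"
      if "j \<le> n" for j
    proof -
      have "(A ^^ j) ((A ^^ (n - j)) u) = (A ^^ n) u"
        using that by (metis comp_apply funpow_add le_add_diff_inverse)
      then have "innerV w r ((A ^^ j) u) ((A ^^ (n - j)) u) = innerV w r u ((A ^^ n) u)"
        by (simp add: selfadjointV_funpow[OF assms(2)])
      then show ?thesis by (simp add: innerV_scaleR_left innerV_scaleR_right mult_ac)
    qed
    then have "(\<Sum>j\<le>n. innerV w r (?a s j) (?a t (n - j)))
        = (\<Sum>j\<le>n. (- s) ^ j / fact j * ((- t) ^ (n - j) / fact (n - j))) * innerV w r u ((A ^^ n) u)"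
      by (simp add: sum_distrib_right)
    then show "(\<Sum>j\<le>n. innerV w r (?a s j) (?a t (n - j)))
        = ((- (s + t)) ^ n / fact n) * innerV w r u ((A ^^ n) u)"
      by (simp only: coeff)
  qed
  also have "\<dots> = innerV w r u (exp_op A (s + t) u)"
    unfolding exp_op_def
      bounded_linear.suminf[OF bounded_bilinear.bounded_linear_right[OF bounded_bilinear_innerV]
        summable_exp_op_terms[OF bl]]
    by (simp add: innerV_scaleR_right)
  finally show ?thesis .
qed

lemma innerV_exp_op_pos:
  assumes deg: "\<forall>i. 0 < deg w i" and "linear A" and "selfadjointV w r A" and "u \<noteq> 0"
  shows "0 < innerV w r u (exp_op A t u)"
proof -
  note semigroup = innerV_exp_op_exp_op[OF assms(2,3)]
  have "exp_op A (t / 2) u \<noteq> 0"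
  proof
    assume "exp_op A (t / 2) u = 0"
    then have "innerV w r u u = 0"
      using semigroup[of "t / 2" u "- (t / 2)"] by (simp add: exp_op_0)
    with innerV_self_pos[where r=r, OF deg \<open>u \<noteq> 0\<close>] show False by simp
  qed
  then have "0 < innerV w r (exp_op A (t / 2) u) (exp_op A (t / 2) u)"
    by (rule innerV_self_pos[OF deg])
  then show ?thesis using semigroup[of "t / 2" u "t / 2"] by simp
qed

lemma linear_Lap:
  fixes w :: "'v::finite \<Rightarrow> 'v \<Rightarrow> real"
  shows "linear (Lap w r)"
proof (rule linearI)
  fix x y :: "real^'v"
  have "(\<Sum>j\<in>UNIV. w i j * ((x + y) $ i - (x + y) $ j)) =
      (\<Sum>j\<in>UNIV. w i j * (x $ i - x $ j)) + (\<Sum>j\<in>UNIV. w i j * (y $ i - y $ j))" for i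
    by (simp add: sum.distrib[symmetric] algebra_simps)
  then show "Lap w r (x + y) = Lap w r x + Lap w r y"
    unfolding Lap_def vec_eq_iff by (simp add: ring_distribs)
qed (simp add: Lap_def vec_eq_iff sum_distrib_left algebra_simps)

lemma Lap_chi_UNIV: "Lap w r (chi UNIV) = 0"
  unfolding Lap_def chi_def by (simp add: vec_eq_iff)

lemma linear_massV: "linear (massV w r)"
  using bilinear_innerV unfolding bilinear_def innerV_chi_UNIV[symmetric] by blast

lemma massV_chi_UNIV: "massV w r (chi UNIV) = (\<Sum>i\<in>UNIV. deg w i powr r)"
  unfolding massV_def chi_def by simp

lemmas Lap_0 [simp] = linear_0[OF linear_Lap]
  and massV_0 [simp] = linear_0[OF linear_massV]

lemma linear_avgV: "linear (avgV w r)"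
  unfolding avgV_def
  by (rule linearI) (simp_all add: linear_add[OF linear_massV] linear_scale[OF linear_massV]
      add_divide_distrib scaleR_add_left)

lemma chi_in_Kset: "chi A \<in> Kset"
  unfolding Kset_def chi_def by simp

lemma chi_eq_iff: "chi A = chi B \<longleftrightarrow> A = B"
  unfolding chi_def vec_eq_iff by (auto split: if_splits)

text \<open>Thresholding expL at 1/2 is thresholding the coefficients 1 - 2 expL of the
  linear functional dJtau at 0, which minimises it over Kset vertex by vertex.\<close>
lemma dJtau_okmbo_step_le:
  assumes "v \<in> Kset"
  shows "dJtau w r \<gamma> t (chi A) (chi (okmbo_step w r \<gamma> t A)) \<le> dJtau w r \<gamma> t (chi A) v"
  unfolding dJtau_def innerV_def
proof (rule sum_mono)
  fix i
  let ?e = "(chi UNIV - 2 *\<^sub>R expL w r \<gamma> t (chi A)) $ i"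
  have c: "0 \<le> deg w i powr r" by simp
  have v: "0 \<le> v $ i" "v $ i \<le> 1" using assms unfolding Kset_def by auto
  show "deg w i powr r * ?e * chi (okmbo_step w r \<gamma> t A) $ i \<le> deg w i powr r * ?e * v $ i"
  proof (cases "1 / 2 \<le> expL w r \<gamma> t (chi A) $ i")
    case True
    then have "deg w i powr r * ?e \<le> 0"
      using c by (simp add: chi_def mult_nonneg_nonpos)
    then have "deg w i powr r * ?e * 1 \<le> deg w i powr r * ?e * v $ i"
      using v by (intro mult_left_mono_neg) auto
    with True show ?thesis by (simp add: chi_def okmbo_step_def)
  next
    case False
    then have "0 \<le> deg w i powr r * ?e"
      using c by (simp add: chi_def)
    then have "0 \<le> deg w i powr r * ?e * v $ i"
      using v by simp
    with False show ?thesis by (simp add: chi_def okmbo_step_def)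
  qed
qed

locale connected_wgraph =
  fixes w :: "'v::finite \<Rightarrow> 'v \<Rightarrow> real" and r :: real
  assumes wgraph: "wgraph w" and two_vertices: "CARD('v) \<ge> 2"
begin

lemma weight_sym: "w i j = w j i"
  and weight_nonneg: "0 \<le> w i j"
  and connected: "(i, j) \<in> {(a, b). 0 < w a b}\<^sup>*"
  using wgraph unfolding wgraph_def by blast+

lemma deg_pos: "0 < deg w i"
proof -
  obtain j where "j \<noteq> i"
    using two_vertices by (metis card_2_iff' ex_card)
  then have "(i, j) \<in> {(a, b). 0 < w a b}\<^sup>+"
    using connected[of i j] by (metis rtranclD)
  then obtain k where "0 < w i k" by (auto dest: tranclD)
  also have "w i k \<le> deg w i"
    unfolding deg_def by (rule member_le_sum) (auto simp: weight_nonneg)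
  finally show ?thesis .
qed

lemma innerV_Lap: "innerV w r x (Lap w r y) = (\<Sum>i\<in>UNIV. \<Sum>j\<in>UNIV. w i j * x $ i * (y $ i - y $ j))"
proof -
  have "deg w i powr r * x $ i * Lap w r y $ i = x $ i * (\<Sum>j\<in>UNIV. w i j * (y $ i - y $ j))" for i
    using deg_pos[of i] by (simp add: Lap_def powr_minus field_simps)
  then show ?thesis
    unfolding innerV_def by (simp add: sum_distrib_left mult_ac)
qed

lemma two_innerV_Lap:
  "2 * innerV w r x (Lap w r y) = (\<Sum>i\<in>UNIV. \<Sum>j\<in>UNIV. w i j * (x $ i - x $ j) * (y $ i - y $ j))"
proof -
  have "innerV w r x (Lap w r y) = (\<Sum>i\<in>UNIV. \<Sum>j\<in>UNIV. w j i * x $ j * (y $ j - y $ i))"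
    unfolding innerV_Lap by (rule sum.swap)
  also have "\<dots> = - (\<Sum>i\<in>UNIV. \<Sum>j\<in>UNIV. w i j * x $ j * (y $ i - y $ j))"
    unfolding sum_negf[symmetric] by (intro sum.cong refl) (simp add: weight_sym algebra_simps)
  finally show ?thesis
    unfolding mult_2 by (subst (1) innerV_Lap) (simp add: sum_subtractf[symmetric] algebra_simps)
qed

lemma selfadjointV_Lap: "selfadjointV w r (Lap w r)"
  unfolding selfadjointV_def
proof (intro allI)
  fix x y
  have "2 * innerV w r x (Lap w r y) = 2 * innerV w r y (Lap w r x)"
    unfolding two_innerV_Lap by (simp add: mult_ac)
  then show "innerV w r (Lap w r x) y = innerV w r x (Lap w r y)" by (simp add: innerV_commute)
qed

lemma massV_Lap: "massV w r (Lap w r y) = 0"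
  using selfadjointV_Lap unfolding selfadjointV_def innerV_chi_UNIV[symmetric]
  by (metis Lap_chi_UNIV innerV_zero_left)

lemma sum_deg_powr_pos: "0 < (\<Sum>i\<in>UNIV. deg w i powr r)"
proof -
  have "0 < deg w i powr r" for i using deg_pos[of i] by simp
  then show ?thesis by (simp add: sum_pos)
qed

text \<open>The Dirichlet form vanishes, so p is constant along edges and hence, by
  connectedness, constant.\<close>
lemma Lap_eq_0_imp_const:
  assumes "Lap w r p = 0"
  shows "p = p $ a *\<^sub>R chi UNIV"
proof -
  have terms_nonneg: "0 \<le> w i j * (p $ i - p $ j) * (p $ i - p $ j)" for i j
    by (simp add: weight_nonneg mult.assoc)
  have "(\<Sum>i\<in>UNIV. \<Sum>j\<in>UNIV. w i j * (p $ i - p $ j) * (p $ i - p $ j)) = 0"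
    using two_innerV_Lap[of p p] assms by simp
  then have terms_0: "w i j * (p $ i - p $ j) * (p $ i - p $ j) = 0" for i j
    using terms_nonneg by (simp add: sum_nonneg_eq_0_iff sum_nonneg)
  have edge: "p $ i = p $ j" if "0 < w i j" for i j
    using terms_0[of i j] that by simp
  have "p $ i = p $ j" if "(i, j) \<in> {(a, b). 0 < w a b}\<^sup>*" for i j
    using that by (induction rule: rtrancl_induct) (auto dest: edge)
  then show ?thesis
    using connected by (simp add: vec_eq_iff chi_def)
qed

lemma Lap_massV_eq_0_imp_0:
  assumes "Lap w r p = 0" and "massV w r p = 0"
  shows "p = 0"
proof -
  fix a
  have "p = p $ a *\<^sub>R chi UNIV" by (rule Lap_eq_0_imp_const[OF assms(1)])
  then have "p $ a * massV w r (chi UNIV) = 0"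
    using assms(2) by (metis linear_scale[OF linear_massV] real_scaleR_def)
  then have "p $ a = 0" using sum_deg_powr_pos by (simp add: massV_chi_UNIV)
  then show ?thesis using \<open>p = p $ a *\<^sub>R chi UNIV\<close> by simp
qed

lemma massV_avgV: "massV w r (avgV w r u) = massV w r u"
  using sum_deg_powr_pos
  unfolding avgV_def linear_scale[OF linear_massV] massV_chi_UNIV by simp

lemma phiV_exists: "\<exists>p. Lap w r p = u - avgV w r u \<and> massV w r p = 0"
proof -
  define T where "T p = Lap w r p + massV w r p *\<^sub>R chi UNIV" for p
  have massV_T: "massV w r (T p) = massV w r p * (\<Sum>i\<in>UNIV. deg w i powr r)" for p
    unfolding T_def linear_add[OF linear_massV] linear_scale[OF linear_massV] massV_Lap
    by (simp add: massV_chi_UNIV)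
  have "linear T"
    unfolding T_def
    by (rule linearI) (simp_all add: linear_add[OF linear_Lap] linear_scale[OF linear_Lap]
        linear_add[OF linear_massV] linear_scale[OF linear_massV] algebra_simps scaleR_add_left)
  moreover have "inj T"
  proof (rule injI)
    fix x y assume "T x = T y"
    then have "T (x - y) = 0" using linear_diff[OF \<open>linear T\<close>] by simp
    then have "massV w r (x - y) = 0"
      using massV_T[of "x - y"] sum_deg_powr_pos by simp
    moreover from this have "Lap w r (x - y) = 0"
      using \<open>T (x - y) = 0\<close> by (simp add: T_def)
    ultimately show "x = y" using Lap_massV_eq_0_imp_0[of "x - y"] by simp
  qed
  ultimately obtain p where p: "T p = u - avgV w r u"
    by (metis linear_injective_imp_surjective surjD)
  have "massV w r (u - avgV w r u) = 0"
    by (simp add: linear_diff[OF linear_massV] massV_avgV)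
  then have "massV w r p = 0"
    using p massV_T[of p] sum_deg_powr_pos by simp
  with p show ?thesis unfolding T_def by auto
qed

lemma Lap_phiV: "Lap w r (phiV w r u) = u - avgV w r u" and massV_phiV: "massV w r (phiV w r u) = 0"
proof -
  have "\<exists>!p. Lap w r p = u - avgV w r u \<and> massV w r p = 0"
  proof (rule ex_ex1I[OF phiV_exists])
    fix p q
    assume "Lap w r p = u - avgV w r u \<and> massV w r p = 0" "Lap w r q = u - avgV w r u \<and> massV w r q = 0"
    then have "Lap w r (p - q) = 0" "massV w r (p - q) = 0"
      by (simp_all add: linear_diff[OF linear_Lap] linear_diff[OF linear_massV])
    then show "p = q" using Lap_massV_eq_0_imp_0[of "p - q"] by simp
  qed
  from theI'[OF this] show "Lap w r (phiV w r u) = u - avgV w r u" "massV w r (phiV w r u) = 0"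
    unfolding phiV_def by auto
qed

lemma phiV_eqI:
  assumes "Lap w r p = u - avgV w r u" and "massV w r p = 0"
  shows "phiV w r u = p"
  using assms Lap_phiV[of u] massV_phiV[of u] Lap_massV_eq_0_imp_0[of "phiV w r u - p"]
  by (simp add: linear_diff[OF linear_Lap] linear_diff[OF linear_massV])

lemma linear_phiV: "linear (phiV w r)"
proof (rule linearI)
  show "phiV w r (x + y) = phiV w r x + phiV w r y" for x y
    by (rule phiV_eqI) (simp_all add: linear_add[OF linear_Lap] linear_add[OF linear_massV]
        linear_add[OF linear_avgV] Lap_phiV massV_phiV)
  show "phiV w r (c *\<^sub>R x) = c *\<^sub>R phiV w r x" for c x
    by (rule phiV_eqI) (simp_all add: linear_scale[OF linear_Lap] linear_scale[OF linear_massV]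
        linear_scale[OF linear_avgV] Lap_phiV massV_phiV scaleR_diff_right)
qed

lemma innerV_phiV_avgV: "innerV w r (phiV w r x) (avgV w r y) = 0"
  unfolding avgV_def innerV_scaleR_right innerV_commute[of _ _ _ "chi UNIV"] innerV_chi_UNIV
  by (simp add: massV_phiV)

lemma selfadjointV_phiV: "selfadjointV w r (phiV w r)"
  unfolding selfadjointV_def
proof (intro allI)
  fix x y
  have "innerV w r (phiV w r x) y = innerV w r (phiV w r x) (Lap w r (phiV w r y))"
    using Lap_phiV[of y] by (simp add: innerV_diff_right innerV_phiV_avgV)
  also have "\<dots> = innerV w r (x - avgV w r x) (phiV w r y)"
    by (metis selfadjointV_Lap selfadjointV_def Lap_phiV)
  also have "\<dots> = innerV w r x (phiV w r y)"
    by (simp add: innerV_diff_left innerV_commute[of _ _ "avgV w r x"] innerV_phiV_avgV)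
  finally show "innerV w r (phiV w r x) y = innerV w r x (phiV w r y)" .
qed

lemma phiV_chi_UNIV: "phiV w r (chi UNIV) = 0"
  using sum_deg_powr_pos by (intro phiV_eqI) (simp_all add: avgV_def massV_chi_UNIV)

lemma linear_Lop: "linear (Lop w r \<gamma>)"
  unfolding Lop_def
  by (rule linearI) (simp_all add: linear_add[OF linear_Lap] linear_scale[OF linear_Lap]
      linear_add[OF linear_phiV] linear_scale[OF linear_phiV] algebra_simps)

lemma selfadjointV_Lop: "selfadjointV w r (Lop w r \<gamma>)"
  using selfadjointV_Lap selfadjointV_phiV
  by (simp add: selfadjointV_def Lop_def innerV_add_left innerV_add_right
      innerV_scaleR_left innerV_scaleR_right)

lemma Lop_chi_UNIV: "Lop w r \<gamma> (chi UNIV) = 0"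
  by (simp add: Lop_def Lap_chi_UNIV phiV_chi_UNIV)

lemma bounded_linear_Lop: "bounded_linear (Lop w r \<gamma>)"
  using linear_Lop linear_conv_bounded_linear by blast

lemma linear_expL: "linear (expL w r \<gamma> t)"
  unfolding expL_eq_exp_op by (rule linear_exp_op[OF bounded_linear_Lop])

lemma innerV_expL_left: "innerV w r (expL w r \<gamma> t x) y = innerV w r x (expL w r \<gamma> t y)"
  using selfadjointV_exp_op[OF linear_Lop selfadjointV_Lop]
  unfolding expL_eq_exp_op selfadjointV_def by blast

lemma expL_chi_UNIV: "expL w r \<gamma> t (chi UNIV) = chi UNIV"
  unfolding expL_eq_exp_op by (rule exp_op_kernel[OF linear_Lop Lop_chi_UNIV])

lemma innerV_expL_pos: "u \<noteq> 0 \<Longrightarrow> 0 < innerV w r u (expL w r \<gamma> t u)"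
  unfolding expL_eq_exp_op using deg_pos
  by (intro innerV_exp_op_pos[OF _ linear_Lop selfadjointV_Lop]) auto

lemma innerV_chi_UNIV_expL: "innerV w r (chi UNIV) (expL w r \<gamma> t u) = massV w r u"
  using innerV_expL_left[of \<gamma> t "chi UNIV" u] by (simp add: expL_chi_UNIV innerV_chi_UNIV)

lemma Jtau_eq: "Jtau w r \<gamma> t u = massV w r u - innerV w r u (expL w r \<gamma> t u)"
  unfolding Jtau_def innerV_diff_left innerV_chi_UNIV_expL ..

lemma dJtau_eq: "dJtau w r \<gamma> t u h = massV w r h - 2 * innerV w r u (expL w r \<gamma> t h)"
  unfolding dJtau_def innerV_diff_left innerV_scaleR_left innerV_chi_UNIV innerV_expL_left ..

lemma linear_dJtau: "linear (dJtau w r \<gamma> t u)"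
  using bilinear_innerV unfolding dJtau_def bilinear_def by blast

lemma Jtau_expansion:
  "Jtau w r \<gamma> t v = Jtau w r \<gamma> t u + dJtau w r \<gamma> t u (v - u)
     - innerV w r (v - u) (expL w r \<gamma> t (v - u))"
proof -
  have "innerV w r v (expL w r \<gamma> t u) = innerV w r u (expL w r \<gamma> t v)"
    by (metis innerV_commute innerV_expL_left)
  then show ?thesis
    unfolding Jtau_eq dJtau_eq linear_diff[OF linear_expL] linear_diff[OF linear_massV]
      innerV_diff_left innerV_diff_right
    by (simp add: algebra_simps)
qed

lemma strictly_concave_Jtau: "strictly_concave_on UNIV (Jtau w r \<gamma> t)"
  unfolding strictly_concave_on_def
proof (intro conjI ballI impI allI)
  fix x y :: "real^'v" and s :: real
  assume "x \<noteq> y" and s: "0 < s \<and> s < 1"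
  define m where "m = (1 - s) *\<^sub>R x + s *\<^sub>R y"
  define q where "q = innerV w r (x - y) (expL w r \<gamma> t (x - y))"
  have q: "0 < q" unfolding q_def using \<open>x \<noteq> y\<close> by (simp add: innerV_expL_pos)
  have xm: "x - m = s *\<^sub>R (x - y)" and ym: "y - m = (s - 1) *\<^sub>R (x - y)"
    unfolding m_def by (simp_all add: algebra_simps)
  define d where "d = dJtau w r \<gamma> t m (x - y)"
  have "Jtau w r \<gamma> t x = Jtau w r \<gamma> t m + s * d - s * s * q"
    using Jtau_expansion[of \<gamma> t x m]
    by (simp add: xm q_def d_def linear_scale[OF linear_expL] linear_scale[OF linear_dJtau]
        innerV_scaleR_left innerV_scaleR_right)
  moreover have "Jtau w r \<gamma> t y = Jtau w r \<gamma> t m + (s - 1) * d - (s - 1) * (s - 1) * q"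
    using Jtau_expansion[of \<gamma> t y m]
    by (simp add: ym q_def d_def linear_scale[OF linear_expL] linear_scale[OF linear_dJtau]
        innerV_scaleR_left innerV_scaleR_right)
  ultimately have "(1 - s) * Jtau w r \<gamma> t x + s * Jtau w r \<gamma> t y
      = (1 - s) * (Jtau w r \<gamma> t m + s * d - s * s * q)
        + s * (Jtau w r \<gamma> t m + (s - 1) * d - (s - 1) * (s - 1) * q)"
    by simp
  also have "\<dots> = Jtau w r \<gamma> t m - s * (1 - s) * q"
    by (simp add: algebra_simps)
  also have "\<dots> < Jtau w r \<gamma> t m" using s q by simp
  finally show "(1 - s) * Jtau w r \<gamma> t x + s * Jtau w r \<gamma> t y < Jtau w r \<gamma> t ((1 - s) *\<^sub>R x + s *\<^sub>R y)"
    unfolding m_def .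
qed simp

lemma has_derivative_Jtau: "(Jtau w r \<gamma> t has_derivative dJtau w r \<gamma> t u) (at u)"
proof -
  have "(expL w r \<gamma> t has_derivative expL w r \<gamma> t) (at u)"
    using linear_expL linear_conv_bounded_linear bounded_linear_imp_has_derivative by blast
  then have "((\<lambda>x. innerV w r (chi UNIV - x) (expL w r \<gamma> t x)) has_derivative
      (\<lambda>h. innerV w r (chi UNIV - u) (expL w r \<gamma> t h) + innerV w r (- h) (expL w r \<gamma> t u))) (at u)"
    by (intro bounded_bilinear.FDERIV[OF bounded_bilinear_innerV]) (auto intro!: derivative_eq_intros)
  moreover have "innerV w r (chi UNIV - u) (expL w r \<gamma> t h) + innerV w r (- h) (expL w r \<gamma> t u)
      = dJtau w r \<gamma> t u h" for h
  proof -
    have "innerV w r h (expL w r \<gamma> t u) = innerV w r u (expL w r \<gamma> t h)"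
      by (metis innerV_commute innerV_expL_left)
    then show ?thesis
      by (simp add: dJtau_eq innerV_diff_left innerV_minus_left innerV_chi_UNIV_expL)
  qed
  ultimately show ?thesis unfolding Jtau_def by simp
qed

lemma Jtau_okmbo_step:
  assumes "B = okmbo_step w r \<gamma> t A"
  shows "Jtau w r \<gamma> t (chi B) \<le> Jtau w r \<gamma> t (chi A)"
    and "Jtau w r \<gamma> t (chi B) = Jtau w r \<gamma> t (chi A) \<longleftrightarrow> B = A"
proof -
  let ?d = "chi B - chi A"
  have "dJtau w r \<gamma> t (chi A) ?d \<le> 0"
    using dJtau_okmbo_step_le[OF chi_in_Kset, where A = A and w = w and r = r and \<gamma> = \<gamma> and t = t] assms
    by (simp add: linear_diff[OF linear_dJtau])
  moreover have "0 \<le> innerV w r ?d (expL w r \<gamma> t ?d)" and "B \<noteq> A \<Longrightarrow> 0 < innerV w r ?d (expL w r \<gamma> t ?d)"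
    using innerV_expL_pos[of ?d \<gamma> t] chi_eq_iff[of B A] by (cases "B = A"; simp)+
  ultimately show "Jtau w r \<gamma> t (chi B) \<le> Jtau w r \<gamma> t (chi A)"
    and "Jtau w r \<gamma> t (chi B) = Jtau w r \<gamma> t (chi A) \<longleftrightarrow> B = A"
    using Jtau_expansion[of \<gamma> t "chi B" "chi A"] by force+
qed

end

theorem lemma5p5:
  fixes w :: "'v::finite \<Rightarrow> 'v \<Rightarrow> real" and r \<gamma> \<tau> :: real
    and S :: "nat \<Rightarrow> 'v set"
  assumes "CARD('v) \<ge> 2" and "wgraph w"
    and "0 \<le> r" and "r \<le> 1" and "0 \<le> \<gamma>" and "0 < \<tau>"
  shows "strictly_concave_on UNIV (Jtau w r \<gamma> \<tau>)
    \<and> (\<forall>u. (Jtau w r \<gamma> \<tau> has_derivative dJtau w r \<gamma> \<tau> u) (at u))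
    \<and> ((\<forall>k. S (Suc k) = okmbo_step w r \<gamma> \<tau> (S k)) \<longrightarrow>
        (\<forall>k. chi (S (Suc k)) \<in> Kset
           \<and> (\<forall>v\<in>Kset. dJtau w r \<gamma> \<tau> (chi (S k)) (chi (S (Suc k)))
                          \<le> dJtau w r \<gamma> \<tau> (chi (S k)) v)
           \<and> Jtau w r \<gamma> \<tau> (chi (S (Suc k))) \<le> Jtau w r \<gamma> \<tau> (chi (S k))
           \<and> (Jtau w r \<gamma> \<tau> (chi (S (Suc k))) = Jtau w r \<gamma> \<tau> (chi (S k))
                \<longleftrightarrow> S (Suc k) = S k)))"
proof -
  interpret connected_wgraph w r
    using assms(1,2) by unfold_locales
  show ?thesis
    using strictly_concave_Jtau has_derivative_Jtau chi_in_Kset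
      dJtau_okmbo_step_le Jtau_okmbo_step
    by metis
qed

end
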